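(* Let $D$ be a diagram of a knot $K$, let $n=\omega(D)$ be its Wirtinger number, and let $E=\{e_1,\dots,e_n\}$ be a generating set of seeds for $D$ with $n$ elements. For each finite Coxeter group $H$ with $r(H)=n$, fix a robust subset $\mathcal{A}_H\subseteq \mathrm{Gen}(H)$. Consider the following search: for every finite Coxeter group $H$ with $r(H)=n$, every $R\in\mathcal{A}_H$ and every bijection $f:E\to R$, label each seed $e_i$ by $f(e_i)$, extend the labeling along a complete coloring sequence starting from $E$ (at each coloring move with overstrand $o$ and understrands $u_1,u_2$, where $u_2$ is the newly colored strand, set the label of $u_2$ to $g_o g_{u_1} g_o$), and then test whether the resulting labeling of all strands is an $H$-coloring of $D$. Then $D$ exhibits a maximal rank quotient onto a finite Coxeter group, i.e. there is a finite Coxeter group $H$ with $r(H)=\omega(D)$ and a surjective homomorphism $\pi_1(S^3\setminus K)\twoheadrightarrow H$ sending meridians to reflections, if and only if this search finds some $H$, $R$ and $f$ for which the test succeeds. Moreover, the search succeeds for a given $H$ exactly when such a surjection onto that $H$ exists.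
   Context: A Coxeter group $C(\Gamma)$ is given by a finite simple graph $\Gamma$ with edges labeled by integers $>1$. It is generated by elements in bijection with the vertices of $\Gamma$, subject to the relations $s^2=1$ for every generator $s$ and $(st)^k=1$ whenever $s,t$ are joined by an edge of weight $k$. A reflection is any element conjugate to one of these generators. The Coxeter rank $r(G)$ is the minimal cardinality of a generating set of $G$ consisting of reflections. A homomorphism from a knot group to a Coxeter group is called good if it maps meridians to reflections. Diagram notions. The strands of a diagram $D$ are its arcs, i.e. the overstrands between undercrossings. At a crossing $c$ let $o$ be the overstrand and $u_1,u_2$ the two understrands. Given a set $W$ of "colored" strands, a coloring move at $c$ is possible when $o,u_1\in W$ and $u_2\notin W$; it replaces $W$ by $W\cup\{u_2\}$. A set of $n$ strands is a generating set of seeds if some sequence of coloring moves starting from it colors every strand of $D$; such a sequence is a complete coloring sequence. The Wirtinger number $\omega(D)$ is the smallest size of a generating set of seeds for $D$. For a group $G$, a $G$-coloring of $D$ by reflections is an assignment $s\mapsto g_s$ of a reflection $g_s\in G$ to each strand $s$ such that at every crossing with overstrand $o$ and understrands $u_1,u_2$ one has $g_o g_{u_1} g_o^{-1}=g_{u_2}$. Since reflections are involutions, this condition does not depend on orientations. Robust sets. $\mathrm{Gen}(H)$ is the set of all generating sets of $H$ that consist of exactly $r(H)$ reflections. Two such sets $\{r_i\}$ and $\{\rho_i\}$ are equivalent if there is $g\in H$ with $\{g^{-1}r_ig\}=\{\rho_i\}$. A subset $\mathcal{A}\subseteq\mathrm{Gen}(H)$ is robust if it contains at least one member of every equivalence class.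 *)

theory Defs
  imports "HOL-Algebra.Algebra"
begin

text \<open>Words over generators Gs: letters (x, True) = x, (x, False) = x^-1.
  One rewriting step deletes a relator or a cancelling pair x x^-1 from a word.\<close>

definition pres_step :: "'g set \<Rightarrow> ('g \<times> bool) list set \<Rightarrow> ('g \<times> bool) list \<Rightarrow> ('g \<times> bool) list \<Rightarrow> bool" where
  "pres_step Gs R u v \<longleftrightarrow>
     (\<exists>xs ys r. u = xs @ r @ ys \<and> v = xs @ ys \<and>
        (r \<in> R \<or> (\<exists>x b. x \<in> Gs \<and> r = [(x, b), (x, \<not> b)])))"

definition pres_eq :: "'g set \<Rightarrow> ('g \<times> bool) list set \<Rightarrow> ('g \<times> bool) list \<Rightarrow> ('g \<times> bool) list \<Rightarrow> bool" where
  "pres_eq Gs R = equivclp (pres_step Gs R)"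

definition pres_class :: "'g set \<Rightarrow> ('g \<times> bool) list set \<Rightarrow> ('g \<times> bool) list \<Rightarrow> ('g \<times> bool) list set" where
  "pres_class Gs R w = {v. pres_eq Gs R w v}"

definition presented_group :: "'g set \<Rightarrow> ('g \<times> bool) list set \<Rightarrow> ('g \<times> bool) list set monoid" where
  "presented_group Gs R =
     \<lparr> carrier = pres_class Gs R ` lists (Gs \<times> UNIV),
       monoid.mult = (\<lambda>A B. {v. \<exists>a\<in>A. \<exists>b\<in>B. pres_eq Gs R (a @ b) v}),
       one = pres_class Gs R [] \<rparr>"

definition pres_gen :: "'g set \<Rightarrow> ('g \<times> bool) list set \<Rightarrow> 'g \<Rightarrow> ('g \<times> bool) list set" where
  "pres_gen Gs R x = pres_class Gs R [(x, True)]"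

text \<open>A Coxeter graph: finite vertex set V (vertices are naturals), weight function m,
  symmetric; distinct s t in V are joined by an edge of weight m s t iff m s t > 1.\<close>
definition coxeter_graph :: "nat set \<Rightarrow> (nat \<Rightarrow> nat \<Rightarrow> nat) \<Rightarrow> bool" where
  "coxeter_graph V m \<longleftrightarrow> finite V \<and> (\<forall>s t. m s t = m t s)"

definition cox_rels :: "nat set \<Rightarrow> (nat \<Rightarrow> nat \<Rightarrow> nat) \<Rightarrow> (nat \<times> bool) list set" where
  "cox_rels V m =
     {[(s, True), (s, True)] | s. s \<in> V} \<union>
     {concat (replicate (m s t) [(s, True), (t, True)]) | s t. s \<in> V \<and> t \<in> V \<and> s \<noteq> t \<and> m s t > 1}"

definition cox_group :: "nat set \<Rightarrow> (nat \<Rightarrow> nat \<Rightarrow> nat) \<Rightarrow> (nat \<times> bool) list set monoid" where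
  "cox_group V m = presented_group V (cox_rels V m)"

definition reflections :: "nat set \<Rightarrow> (nat \<Rightarrow> nat \<Rightarrow> nat) \<Rightarrow> (nat \<times> bool) list set set" where
  "reflections V m =
     {g \<otimes>\<^bsub>cox_group V m\<^esub> pres_gen V (cox_rels V m) s \<otimes>\<^bsub>cox_group V m\<^esub> inv\<^bsub>cox_group V m\<^esub> g
       | g s. g \<in> carrier (cox_group V m) \<and> s \<in> V}"

definition coxeter_rank :: "('a, 'b) monoid_scheme \<Rightarrow> 'a set \<Rightarrow> nat" where
  "coxeter_rank H Rfl =
     (LEAST k. \<exists>T. T \<subseteq> Rfl \<and> finite T \<and> card T = k \<and> generate H T = carrier H)"

definition Gen_sets :: "('a, 'b) monoid_scheme \<Rightarrow> 'a set \<Rightarrow> 'a set set" where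
  "Gen_sets H Rfl =
     {T. T \<subseteq> Rfl \<and> finite T \<and> card T = coxeter_rank H Rfl \<and> generate H T = carrier H}"

definition gen_equiv :: "('a, 'b) monoid_scheme \<Rightarrow> 'a set \<Rightarrow> 'a set \<Rightarrow> bool" where
  "gen_equiv H R1 R2 \<longleftrightarrow> (\<exists>g \<in> carrier H. (\<lambda>r. inv\<^bsub>H\<^esub> g \<otimes>\<^bsub>H\<^esub> r \<otimes>\<^bsub>H\<^esub> g) ` R1 = R2)"

definition robust :: "('a, 'b) monoid_scheme \<Rightarrow> 'a set \<Rightarrow> 'a set set \<Rightarrow> bool" where
  "robust H Rfl \<A> \<longleftrightarrow> \<A> \<subseteq> Gen_sets H Rfl \<and>
     (\<forall>R \<in> Gen_sets H Rfl. \<exists>R' \<in> \<A>. gen_equiv H R R')"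

text \<open>A knot diagram with N crossings is encoded by the list cr of length N: traversing the
  oriented knot, the i-th undercrossing met is crossing i, with overstrand fst (cr ! i) and sign
  snd (cr ! i); the strands (arcs) are 0..<max 1 N, strand i runs from undercrossing i-1 to
  undercrossing i, so crossing i has understrands i and (i+1) mod N.\<close>
definition num_strands :: "(nat \<times> bool) list \<Rightarrow> nat" where
  "num_strands cr = max 1 (length cr)"

definition strands :: "(nat \<times> bool) list \<Rightarrow> nat set" where
  "strands cr = {0..<num_strands cr}"

definition knot_diagram :: "(nat \<times> bool) list \<Rightarrow> bool" where
  "knot_diagram cr \<longleftrightarrow> (\<forall>c \<in> set cr. fst c < num_strands cr)"

text \<open>Crossings as triples (overstrand, understrand, understrand).\<close>
definition crossings :: "(nat \<times> bool) list \<Rightarrow> (nat \<times> nat \<times> nat) set" where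
  "crossings cr = {(fst (cr ! i), i, Suc i mod length cr) | i. i < length cr}"

definition moves :: "(nat \<times> bool) list \<Rightarrow> (nat \<times> nat \<times> nat) set" where
  "moves cr = crossings cr \<union> {(ov, u2, u1) | ov u1 u2. (ov, u1, u2) \<in> crossings cr}"

fun valid_seq :: "(nat \<times> bool) list \<Rightarrow> nat set \<Rightarrow> (nat \<times> nat \<times> nat) list \<Rightarrow> bool" where
  "valid_seq cr W [] = True"
| "valid_seq cr W ((ov, u1, u2) # \<sigma>) \<longleftrightarrow>
     (ov, u1, u2) \<in> moves cr \<and> ov \<in> W \<and> u1 \<in> W \<and> u2 \<notin> W \<and> valid_seq cr (insert u2 W) \<sigma>"

definition complete_seq :: "(nat \<times> bool) list \<Rightarrow> nat set \<Rightarrow> (nat \<times> nat \<times> nat) list \<Rightarrow> bool" where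
  "complete_seq cr E \<sigma> \<longleftrightarrow> E \<subseteq> strands cr \<and> valid_seq cr E \<sigma> \<and>
     E \<union> set (map (\<lambda>(ov, u1, u2). u2) \<sigma>) = strands cr"

definition gen_seeds :: "(nat \<times> bool) list \<Rightarrow> nat set \<Rightarrow> bool" where
  "gen_seeds cr E \<longleftrightarrow> (\<exists>\<sigma>. complete_seq cr E \<sigma>)"

definition wirtinger_number :: "(nat \<times> bool) list \<Rightarrow> nat" where
  "wirtinger_number cr = (LEAST k. \<exists>E. gen_seeds cr E \<and> finite E \<and> card E = k)"

text \<open>Knot group via the Wirtinger presentation of the diagram:
  relator x_{i+1}^-1 x_o^e x_i x_o^-e at crossing i.\<close>
definition wirt_rels :: "(nat \<times> bool) list \<Rightarrow> (nat \<times> bool) list set" where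
  "wirt_rels cr = {[(Suc i mod length cr, False), (fst (cr ! i), snd (cr ! i)), (i, True),
                    (fst (cr ! i), \<not> snd (cr ! i))] | i. i < length cr}"

definition knot_group :: "(nat \<times> bool) list \<Rightarrow> (nat \<times> bool) list set monoid" where
  "knot_group cr = presented_group (strands cr) (wirt_rels cr)"

definition meridians :: "(nat \<times> bool) list \<Rightarrow> (nat \<times> bool) list set set" where
  "meridians cr =
     {g \<otimes>\<^bsub>knot_group cr\<^esub> pres_class (strands cr) (wirt_rels cr) [(s, b)] \<otimes>\<^bsub>knot_group cr\<^esub> inv\<^bsub>knot_group cr\<^esub> g
       | g s b. g \<in> carrier (knot_group cr) \<and> s \<in> strands cr}"

definition good_surj :: "(nat \<times> bool) list \<Rightarrow> nat set \<Rightarrow> (nat \<Rightarrow> nat \<Rightarrow> nat)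
    \<Rightarrow> ((nat \<times> bool) list set \<Rightarrow> (nat \<times> bool) list set) \<Rightarrow> bool" where
  "good_surj cr V m h \<longleftrightarrow> h \<in> hom (knot_group cr) (cox_group V m) \<and>
     h ` meridians cr \<subseteq> reflections V m \<and>
     h ` carrier (knot_group cr) = carrier (cox_group V m)"

definition is_coloring :: "('a, 'b) monoid_scheme \<Rightarrow> 'a set \<Rightarrow> (nat \<times> bool) list \<Rightarrow> (nat \<Rightarrow> 'a) \<Rightarrow> bool" where
  "is_coloring H Rfl cr g \<longleftrightarrow> (\<forall>s \<in> strands cr. g s \<in> Rfl) \<and>
     (\<forall>(ov, u1, u2) \<in> crossings cr. g ov \<otimes>\<^bsub>H\<^esub> g u1 \<otimes>\<^bsub>H\<^esub> inv\<^bsub>H\<^esub> (g ov) = g u2)"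

fun extend_labels :: "('a, 'b) monoid_scheme \<Rightarrow> (nat \<Rightarrow> 'a) \<Rightarrow> (nat \<times> nat \<times> nat) list \<Rightarrow> (nat \<Rightarrow> 'a)" where
  "extend_labels H g [] = g"
| "extend_labels H g ((ov, u1, u2) # \<sigma>) = extend_labels H (g(u2 := g ov \<otimes>\<^bsub>H\<^esub> g u1 \<otimes>\<^bsub>H\<^esub> g ov)) \<sigma>"

definition search_succeeds :: "(nat \<times> bool) list \<Rightarrow> nat set \<Rightarrow> (nat \<times> nat \<times> nat) list
    \<Rightarrow> nat set \<Rightarrow> (nat \<Rightarrow> nat \<Rightarrow> nat) \<Rightarrow> (nat \<times> bool) list set set set \<Rightarrow> bool" where
  "search_succeeds cr E \<sigma> V m \<A> \<longleftrightarrow>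
     (\<exists>R \<in> \<A>. \<exists>f. bij_betw f E R \<and>
        is_coloring (cox_group V m) (reflections V m) cr
          (extend_labels (cox_group V m) (\<lambda>s. if s \<in> E then f s else \<one>\<^bsub>cox_group V m\<^esub>) \<sigma>))"

end

(*
  A good homomorphism from the knot group onto G is the same thing as a coloring of the
  diagram by reflections of G: the Wirtinger generators are sent to the labels, and the
  Wirtinger relations are exactly the coloring conditions.  Since reflections are involutions,
  a coloring is compatible with every coloring move, so it is determined by its labels on a
  generating set of seeds E, and these labels generate the image of the homomorphism.
  Hence if the extended labeling is a coloring whose seed labels form a generating set R,
  the homomorphism is onto.  Conversely, for a surjection the seed labels generate G; being
  at most card E = r(G) reflections they form an element of Gen(G), and conjugating the whole
  coloring by a suitable g moves them into the robust family, which is what the search finds.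
*)

theory Submission
  imports Defs
begin

section \<open>Presented groups\<close>

lemma pres_eq_refl [simp]: "pres_eq Gs R w w"
  unfolding pres_eq_def by simp

lemma pres_eq_sym: "pres_eq Gs R u v \<Longrightarrow> pres_eq Gs R v u"
  unfolding pres_eq_def by (simp add: equivclp_sym)

lemma pres_eq_trans: "pres_eq Gs R u v \<Longrightarrow> pres_eq Gs R v w \<Longrightarrow> pres_eq Gs R u w"
  unfolding pres_eq_def by (rule equivclp_trans)

lemma pres_step_imp_pres_eq: "pres_step Gs R u v \<Longrightarrow> pres_eq Gs R u v"
  unfolding pres_eq_def by (rule r_into_equivclp)

lemma pres_step_relator: "r \<in> R \<Longrightarrow> pres_step Gs R (u @ r @ v) (u @ v)"
  unfolding pres_step_def by blast

lemma pres_step_cancel: "x \<in> Gs \<Longrightarrow> pres_step Gs R (u @ [(x, b), (x, \<not> b)] @ v) (u @ v)"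
  unfolding pres_step_def by blast

lemma pres_step_context: "pres_step Gs R u v \<Longrightarrow> pres_step Gs R (a @ u @ b) (a @ v @ b)"
  unfolding pres_step_def by (metis append.assoc)

lemma pres_eq_context: "pres_eq Gs R u v \<Longrightarrow> pres_eq Gs R (a @ u @ b) (a @ v @ b)"
  unfolding pres_eq_def
proof (induction rule: equivclp_induct)
  case (step y z)
  then show ?case
    by (meson converse_r_into_equivclp equivclp_into_equivclp pres_step_context)
qed simp

lemma pres_eq_append: "pres_eq Gs R a a' \<Longrightarrow> pres_eq Gs R b b' \<Longrightarrow> pres_eq Gs R (a @ b) (a' @ b')"
  using pres_eq_context[of Gs R a a' "[]" b] pres_eq_context[of Gs R b b' a' "[]"]
  by (auto intro: pres_eq_trans)

lemma pres_class_eq_iff: "pres_class Gs R a = pres_class Gs R b \<longleftrightarrow> pres_eq Gs R a b"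
  unfolding pres_class_def by (auto dest: pres_eq_sym intro: pres_eq_trans)

lemma presented_group_carrier: "carrier (presented_group Gs R) = pres_class Gs R ` lists (Gs \<times> UNIV)"
  by (simp add: presented_group_def)

lemma presented_group_one: "\<one>\<^bsub>presented_group Gs R\<^esub> = pres_class Gs R []"
  by (simp add: presented_group_def)

lemma presented_group_mult:
  "pres_class Gs R a \<otimes>\<^bsub>presented_group Gs R\<^esub> pres_class Gs R b = pres_class Gs R (a @ b)"
  unfolding presented_group_def pres_class_def
  by (auto intro: pres_eq_trans pres_eq_append pres_eq_sym) (meson pres_eq_refl)

definition word_inverse :: "('g \<times> bool) list \<Rightarrow> ('g \<times> bool) list" where
  "word_inverse w = rev (map (\<lambda>(x, b). (x, \<not> b)) w)"

lemma word_inverse_in_lists: "w \<in> lists (Gs \<times> UNIV) \<Longrightarrow> word_inverse w \<in> lists (Gs \<times> UNIV)"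
  unfolding word_inverse_def by auto

lemma pres_eq_word_inverse_append: "w \<in> lists (Gs \<times> UNIV) \<Longrightarrow> pres_eq Gs R (word_inverse w @ w) []"
proof (induction w)
  case (Cons a w)
  obtain x b where a: "a = (x, b)" by force
  have "pres_step Gs R (word_inverse w @ [(x, \<not> b), (x, \<not> \<not> b)] @ w) (word_inverse w @ w)"
    using Cons.prems a by (intro pres_step_cancel) auto
  then have "pres_eq Gs R (word_inverse w @ [(x, \<not> b), (x, b)] @ w) (word_inverse w @ w)"
    by (simp add: pres_step_imp_pres_eq)
  moreover have "word_inverse (a # w) @ a # w = word_inverse w @ [(x, \<not> b), (x, b)] @ w"
    by (simp add: word_inverse_def a)
  ultimately show ?case using Cons by (auto intro: pres_eq_trans)
qed (simp add: word_inverse_def)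

lemma group_presented_group: "group (presented_group Gs R)"
proof (rule groupI)
  fix x y assume "x \<in> carrier (presented_group Gs R)" "y \<in> carrier (presented_group Gs R)"
  then show "x \<otimes>\<^bsub>presented_group Gs R\<^esub> y \<in> carrier (presented_group Gs R)"
    unfolding presented_group_carrier by (auto simp: presented_group_mult intro!: image_eqI)
next
  show "\<one>\<^bsub>presented_group Gs R\<^esub> \<in> carrier (presented_group Gs R)"
    unfolding presented_group_carrier presented_group_one by blast
next
  fix x y z assume "x \<in> carrier (presented_group Gs R)" "y \<in> carrier (presented_group Gs R)"
     "z \<in> carrier (presented_group Gs R)"
  then show "x \<otimes>\<^bsub>presented_group Gs R\<^esub> y \<otimes>\<^bsub>presented_group Gs R\<^esub> z =
       x \<otimes>\<^bsub>presented_group Gs R\<^esub> (y \<otimes>\<^bsub>presented_group Gs R\<^esub> z)"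
    unfolding presented_group_carrier by (auto simp: presented_group_mult)
next
  fix x assume "x \<in> carrier (presented_group Gs R)"
  then show "\<one>\<^bsub>presented_group Gs R\<^esub> \<otimes>\<^bsub>presented_group Gs R\<^esub> x = x"
    unfolding presented_group_carrier by (auto simp: presented_group_one presented_group_mult)
next
  fix x assume "x \<in> carrier (presented_group Gs R)"
  then obtain w where w: "w \<in> lists (Gs \<times> UNIV)" "x = pres_class Gs R w"
    unfolding presented_group_carrier by blast
  then have "pres_class Gs R (word_inverse w) \<otimes>\<^bsub>presented_group Gs R\<^esub> x = \<one>\<^bsub>presented_group Gs R\<^esub>"
    by (simp add: presented_group_one presented_group_mult pres_class_eq_iff pres_eq_word_inverse_append)
  moreover have "pres_class Gs R (word_inverse w) \<in> carrier (presented_group Gs R)"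
    unfolding presented_group_carrier using word_inverse_in_lists[OF w(1)] by blast
  ultimately show "\<exists>y\<in>carrier (presented_group Gs R). y \<otimes>\<^bsub>presented_group Gs R\<^esub> x = \<one>\<^bsub>presented_group Gs R\<^esub>"
    by blast
qed

lemma presented_group_inv:
  assumes "w \<in> lists (Gs \<times> UNIV)"
  shows "inv\<^bsub>presented_group Gs R\<^esub> (pres_class Gs R w) = pres_class Gs R (word_inverse w)"
proof (rule group.inv_equality[OF group_presented_group])
  show "pres_class Gs R (word_inverse w) \<otimes>\<^bsub>presented_group Gs R\<^esub> pres_class Gs R w = \<one>\<^bsub>presented_group Gs R\<^esub>"
    using assms
    by (simp add: presented_group_one presented_group_mult pres_class_eq_iff pres_eq_word_inverse_append)
  show "pres_class Gs R w \<in> carrier (presented_group Gs R)"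
    unfolding presented_group_carrier using assms by blast
  show "pres_class Gs R (word_inverse w) \<in> carrier (presented_group Gs R)"
    unfolding presented_group_carrier using word_inverse_in_lists[OF assms] by blast
qed

lemma pres_gen_carrier: "x \<in> Gs \<Longrightarrow> pres_gen Gs R x \<in> carrier (presented_group Gs R)"
  unfolding presented_group_carrier pres_gen_def by auto

lemma pres_class_letter:
  assumes "x \<in> Gs"
  shows "pres_class Gs R [(x, b)] = (if b then pres_gen Gs R x else inv\<^bsub>presented_group Gs R\<^esub> pres_gen Gs R x)"
  using assms by (simp add: pres_gen_def presented_group_inv word_inverse_def)

lemma presented_group_generated:
  "carrier (presented_group Gs R) = generate (presented_group Gs R) (pres_gen Gs R ` Gs)"
proof
  interpret P: group "presented_group Gs R" by (rule group_presented_group)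
  show "generate (presented_group Gs R) (pres_gen Gs R ` Gs) \<subseteq> carrier (presented_group Gs R)"
    using pres_gen_carrier by (intro P.generate_incl image_subsetI)
  have "w \<in> lists (Gs \<times> UNIV) \<Longrightarrow>
      pres_class Gs R w \<in> generate (presented_group Gs R) (pres_gen Gs R ` Gs)" for w
  proof (induction w)
    case Nil
    show ?case
      unfolding presented_group_one[symmetric] by (rule generate.one)
  next
    case (Cons a w)
    obtain x b where a: "a = (x, b)" by force
    with Cons.prems have "pres_gen Gs R x \<in> pres_gen Gs R ` Gs" "x \<in> Gs" by auto
    then have "pres_class Gs R [(x, b)] \<in> generate (presented_group Gs R) (pres_gen Gs R ` Gs)"
      by (simp add: pres_class_letter generate.incl generate.inv)
    moreover have "pres_class Gs R (a # w) = pres_class Gs R [(x, b)] \<otimes>\<^bsub>presented_group Gs R\<^esub> pres_class Gs R w"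
      by (simp add: presented_group_mult a)
    ultimately show ?case
      using Cons by (simp add: generate.eng)
  qed
  then show "carrier (presented_group Gs R) \<subseteq> generate (presented_group Gs R) (pres_gen Gs R ` Gs)"
    unfolding presented_group_carrier by blast
qed

fun eval_word :: "('a, 'c) monoid_scheme \<Rightarrow> ('g \<Rightarrow> 'a) \<Rightarrow> ('g \<times> bool) list \<Rightarrow> 'a" where
  "eval_word G \<phi> [] = \<one>\<^bsub>G\<^esub>"
| "eval_word G \<phi> ((x, b) # w) = (if b then \<phi> x else inv\<^bsub>G\<^esub> \<phi> x) \<otimes>\<^bsub>G\<^esub> eval_word G \<phi> w"

context group
begin

lemma eval_word_closed: "(\<And>x. \<phi> x \<in> carrier G) \<Longrightarrow> eval_word G \<phi> w \<in> carrier G"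
  by (induction w) auto

lemma eval_word_append:
  "(\<And>x. \<phi> x \<in> carrier G) \<Longrightarrow> eval_word G \<phi> (u @ v) = eval_word G \<phi> u \<otimes> eval_word G \<phi> v"
  by (induction u) (auto simp: m_assoc eval_word_closed)

lemma eval_word_pres_eq:
  assumes \<phi>: "\<And>x. \<phi> x \<in> carrier G" and rel: "\<And>r. r \<in> R \<Longrightarrow> eval_word G \<phi> r = \<one>"
    and "pres_eq Gs R u v"
  shows "eval_word G \<phi> u = eval_word G \<phi> v"
proof -
  have eval_step: "eval_word G \<phi> u' = eval_word G \<phi> v'" if uv: "pres_step Gs R u' v'" for u' v'
  proof -
    obtain xs ys r where u': "u' = xs @ r @ ys" and v': "v' = xs @ ys"
      and r: "r \<in> R \<or> (\<exists>x b. x \<in> Gs \<and> r = [(x, b), (x, \<not> b)])"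
      using uv unfolding pres_step_def by blast
    have "eval_word G \<phi> r = \<one>"
    proof (cases "r \<in> R")
      case False
      then obtain x b where "r = [(x, b), (x, \<not> b)]" using r by blast
      then show ?thesis using \<phi> by (cases b) simp_all
    qed (rule rel)
    then show ?thesis
      using \<phi> by (simp add: u' v' eval_word_append eval_word_closed)
  qed
  show ?thesis
    using \<open>pres_eq Gs R u v\<close> unfolding pres_eq_def
  proof (induction rule: equivclp_induct)
    case (step y z)
    from \<open>pres_step Gs R y z \<or> pres_step Gs R z y\<close> have "eval_word G \<phi> y = eval_word G \<phi> z"
      by (auto dest: eval_step)
    with step.IH show ?case by simp
  qed simp
qed

lemma presented_group_lift:
  assumes \<phi>: "\<And>x. \<phi> x \<in> carrier G" and rel: "\<And>r. r \<in> R \<Longrightarrow> eval_word G \<phi> r = \<one>"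
  shows "\<exists>h \<in> hom (presented_group Gs R) G. \<forall>w. h (pres_class Gs R w) = eval_word G \<phi> w"
proof
  define h where "h A = eval_word G \<phi> (SOME w. w \<in> A)" for A
  show h_class: "\<forall>w. h (pres_class Gs R w) = eval_word G \<phi> w"
  proof
    fix w
    have "w \<in> pres_class Gs R w" by (simp add: pres_class_def)
    then have "pres_eq Gs R w (SOME v. v \<in> pres_class Gs R w)"
      by (metis (mono_tags) mem_Collect_eq pres_class_def someI)
    then show "h (pres_class Gs R w) = eval_word G \<phi> w"
      unfolding h_def using eval_word_pres_eq[OF \<phi> rel] by metis
  qed
  show "h \<in> hom (presented_group Gs R) G"
    by (rule homI)
      (auto simp: presented_group_carrier h_class presented_group_mult eval_word_closed eval_word_append \<phi>)
qed

lemma hom_presented_group_image: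
  assumes "h \<in> hom (presented_group Gs R) G"
  shows "h ` carrier (presented_group Gs R) = generate G ((\<lambda>x. h (pres_gen Gs R x)) ` Gs)"
proof -
  interpret group_hom "presented_group Gs R" G h
    by (simp add: group_hom_def group_hom_axioms_def group_presented_group is_group assms)
  have "pres_gen Gs R ` Gs \<subseteq> carrier (presented_group Gs R)"
    by (intro image_subsetI pres_gen_carrier)
  then have "generate G (h ` pres_gen Gs R ` Gs) = h ` generate (presented_group Gs R) (pres_gen Gs R ` Gs)"
    by (rule generate_img)
  then show ?thesis
    by (simp add: image_image flip: presented_group_generated)
qed

end

section \<open>Conjugation-invariant sets of involutions\<close>

lemma (in group) conj_mult:
  assumes "g \<in> carrier G" "a \<in> carrier G" "b \<in> carrier G"
  shows "(inv g \<otimes> a \<otimes> g) \<otimes> (inv g \<otimes> b \<otimes> g) = inv g \<otimes> (a \<otimes> b) \<otimes> g"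
proof -
  have "(inv g \<otimes> a \<otimes> g) \<otimes> (inv g \<otimes> b \<otimes> g) = inv g \<otimes> a \<otimes> (g \<otimes> inv g) \<otimes> b \<otimes> g"
    using assms by (simp only: m_assoc m_closed inv_closed)
  also have "\<dots> = inv g \<otimes> a \<otimes> b \<otimes> g"
    using assms by simp
  also have "\<dots> = inv g \<otimes> (a \<otimes> b) \<otimes> g"
    using assms by (simp add: m_assoc)
  finally show ?thesis .
qed

lemma (in group) inj_on_conj: "g \<in> carrier G \<Longrightarrow> inj_on (\<lambda>x. inv g \<otimes> x \<otimes> g) (carrier G)"
  by (rule inj_onI) simp

text \<open>The only properties of the reflections of a Coxeter group that the argument uses.\<close>

locale reflection_system = group G for G (structure) +
  fixes Rfl :: "'a set"
  assumes reflections_closed: "Rfl \<subseteq> carrier G"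
    and reflection_square: "r \<in> Rfl \<Longrightarrow> r \<otimes> r = \<one>"
    and reflection_conj: "r \<in> Rfl \<Longrightarrow> g \<in> carrier G \<Longrightarrow> g \<otimes> r \<otimes> inv g \<in> Rfl"
begin

lemma reflection_carrier: "r \<in> Rfl \<Longrightarrow> r \<in> carrier G"
  using reflections_closed by blast

lemma reflection_inv: "r \<in> Rfl \<Longrightarrow> inv r = r"
  by (simp add: inv_equality reflection_carrier reflection_square)

lemma reflection_conj_inv: "r \<in> Rfl \<Longrightarrow> g \<in> carrier G \<Longrightarrow> inv g \<otimes> r \<otimes> g \<in> Rfl"
  using reflection_conj[of r "inv g"] by simp

lemma reflection_conj_swap:
  assumes "r \<in> Rfl" "b \<in> carrier G" "a = r \<otimes> b \<otimes> r"
  shows "b = r \<otimes> a \<otimes> r"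
proof -
  have "r \<otimes> a \<otimes> r = (r \<otimes> r) \<otimes> b \<otimes> (r \<otimes> r)"
    using assms by (simp add: m_assoc reflection_carrier)
  then show ?thesis
    using assms by (simp add: reflection_square)
qed

lemma hom_pres_class_letter:
  assumes "h \<in> hom (presented_group Gs R) G" "x \<in> Gs" "h (pres_gen Gs R x) \<in> Rfl"
  shows "h (pres_class Gs R [(x, b)]) = h (pres_gen Gs R x)"
proof -
  interpret group_hom "presented_group Gs R" G h
    by (simp add: group_hom_def group_hom_axioms_def group_presented_group is_group assms(1))
  show ?thesis
    using assms by (simp add: pres_class_letter pres_gen_carrier reflection_inv)
qed

end

lemma reflection_system_cox_group: "reflection_system (cox_group V m) (reflections V m)"
proof (intro reflection_system.intro reflection_system_axioms.intro)
  show C: "group (cox_group V m)"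
    unfolding cox_group_def by (rule group_presented_group)
  interpret C: group "cox_group V m" by (fact C)
  let ?s = "pres_gen V (cox_rels V m)"
  have gen: "?s s \<in> carrier (cox_group V m)" if "s \<in> V" for s
    unfolding cox_group_def using that by (rule pres_gen_carrier)
  have gen_square: "?s s \<otimes>\<^bsub>cox_group V m\<^esub> ?s s = \<one>\<^bsub>cox_group V m\<^esub>" if "s \<in> V" for s
  proof -
    have "[(s, True), (s, True)] \<in> cox_rels V m"
      unfolding cox_rels_def using that by blast
    then have "pres_step V (cox_rels V m) ([] @ [(s, True), (s, True)] @ []) ([] @ [])"
      by (rule pres_step_relator)
    then show ?thesis
      unfolding cox_group_def pres_gen_def presented_group_mult presented_group_one pres_class_eq_iff
      by (simp add: pres_step_imp_pres_eq)
  qed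
  show "reflections V m \<subseteq> carrier (cox_group V m)"
    unfolding reflections_def using gen by auto
  fix r g assume r: "r \<in> reflections V m"
  then obtain a s where a: "a \<in> carrier (cox_group V m)" and s: "s \<in> V"
    and r_eq: "r = a \<otimes>\<^bsub>cox_group V m\<^esub> ?s s \<otimes>\<^bsub>cox_group V m\<^esub> inv\<^bsub>cox_group V m\<^esub> a"
    unfolding reflections_def by blast
  have "r \<otimes>\<^bsub>cox_group V m\<^esub> r =
      a \<otimes>\<^bsub>cox_group V m\<^esub> (?s s \<otimes>\<^bsub>cox_group V m\<^esub> ?s s) \<otimes>\<^bsub>cox_group V m\<^esub> inv\<^bsub>cox_group V m\<^esub> a"
    unfolding r_eq using C.conj_mult[of "inv\<^bsub>cox_group V m\<^esub> a" "?s s" "?s s"] a gen[OF s] by simp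
  then show "r \<otimes>\<^bsub>cox_group V m\<^esub> r = \<one>\<^bsub>cox_group V m\<^esub>"
    using a gen_square[OF s] by simp
  assume g: "g \<in> carrier (cox_group V m)"
  have "g \<otimes>\<^bsub>cox_group V m\<^esub> r \<otimes>\<^bsub>cox_group V m\<^esub> inv\<^bsub>cox_group V m\<^esub> g =
      (g \<otimes>\<^bsub>cox_group V m\<^esub> a) \<otimes>\<^bsub>cox_group V m\<^esub> ?s s \<otimes>\<^bsub>cox_group V m\<^esub>
        inv\<^bsub>cox_group V m\<^esub> (g \<otimes>\<^bsub>cox_group V m\<^esub> a)"
    unfolding r_eq using a g gen[OF s] by (simp add: C.m_assoc C.inv_mult_group)
  then show "g \<otimes>\<^bsub>cox_group V m\<^esub> r \<otimes>\<^bsub>cox_group V m\<^esub> inv\<^bsub>cox_group V m\<^esub> g \<in> reflections V m"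
    unfolding reflections_def using a g s by blast
qed

section \<open>Colorings of knot diagrams\<close>

lemma crossing_strands:
  assumes "knot_diagram cr" "(ov, u1, u2) \<in> crossings cr"
  shows "ov \<in> strands cr" "u1 \<in> strands cr" "u2 \<in> strands cr"
proof -
  obtain i where i: "i < length cr" "ov = fst (cr ! i)" "u1 = i" "u2 = Suc i mod length cr"
    using assms(2) unfolding crossings_def by blast
  then show "ov \<in> strands cr"
    using assms(1) nth_mem[OF i(1)] unfolding knot_diagram_def strands_def by auto
  have "0 < length cr"
    using i(1) by linarith
  then show "u1 \<in> strands cr" "u2 \<in> strands cr"
    using i unfolding strands_def num_strands_def by auto
qed

lemma moves_iff: "(ov, u1, u2) \<in> moves cr \<longleftrightarrow> (ov, u1, u2) \<in> crossings cr \<or> (ov, u2, u1) \<in> crossings cr"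
  by (auto simp: moves_def)

lemma crossings_subset_moves: "crossings cr \<subseteq> moves cr"
  by (auto simp: moves_def)

lemma move_strands:
  assumes "knot_diagram cr" "(ov, u1, u2) \<in> moves cr"
  shows "ov \<in> strands cr" "u1 \<in> strands cr" "u2 \<in> strands cr"
  using assms crossing_strands unfolding moves_iff by metis+

lemma is_coloring_cong:
  assumes "knot_diagram cr" "\<And>s. s \<in> strands cr \<Longrightarrow> \<rho> s = \<rho>' s"
  shows "is_coloring H Rfl cr \<rho> \<longleftrightarrow> is_coloring H Rfl cr \<rho>'"
  unfolding is_coloring_def
proof (intro conj_cong ball_cong refl)
  show "s \<in> strands cr \<Longrightarrow> (\<rho> s \<in> Rfl) = (\<rho>' s \<in> Rfl)" for s
    using assms(2) by simp
  show "c \<in> crossings cr \<Longrightarrow> (case c of (ov, u1, u2) \<Rightarrow> \<rho> ov \<otimes>\<^bsub>H\<^esub> \<rho> u1 \<otimes>\<^bsub>H\<^esub> inv\<^bsub>H\<^esub> \<rho> ov = \<rho> u2) =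
      (case c of (ov, u1, u2) \<Rightarrow> \<rho>' ov \<otimes>\<^bsub>H\<^esub> \<rho>' u1 \<otimes>\<^bsub>H\<^esub> inv\<^bsub>H\<^esub> \<rho>' ov = \<rho>' u2)" for c
    by (auto simp: assms(2) crossing_strands[OF assms(1)])
qed

lemma is_coloring_reflection: "is_coloring H Rfl cr \<rho> \<Longrightarrow> s \<in> strands cr \<Longrightarrow> \<rho> s \<in> Rfl"
  by (simp add: is_coloring_def)

context reflection_system
begin

lemma coloring_iff_moves:
  assumes D: "knot_diagram cr"
  shows "is_coloring G Rfl cr \<rho> \<longleftrightarrow> (\<forall>s \<in> strands cr. \<rho> s \<in> Rfl) \<and>
    (\<forall>(ov, u1, u2) \<in> moves cr. \<rho> u2 = \<rho> ov \<otimes> \<rho> u1 \<otimes> \<rho> ov)"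
proof -
  have crossing_iff: "(\<forall>(ov, u1, u2) \<in> crossings cr. \<rho> ov \<otimes> \<rho> u1 \<otimes> inv (\<rho> ov) = \<rho> u2) \<longleftrightarrow>
      (\<forall>(ov, u1, u2) \<in> crossings cr. \<rho> u2 = \<rho> ov \<otimes> \<rho> u1 \<otimes> \<rho> ov)"
    if "\<forall>s \<in> strands cr. \<rho> s \<in> Rfl"
    using that by (intro ball_cong refl) (auto simp: crossing_strands[OF D] reflection_inv)
  have "(\<forall>(ov, u1, u2) \<in> crossings cr. \<rho> u2 = \<rho> ov \<otimes> \<rho> u1 \<otimes> \<rho> ov) \<longleftrightarrow>
      (\<forall>(ov, u1, u2) \<in> moves cr. \<rho> u2 = \<rho> ov \<otimes> \<rho> u1 \<otimes> \<rho> ov)"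
    if refl: "\<forall>s \<in> strands cr. \<rho> s \<in> Rfl"
  proof
    assume cross: "\<forall>(ov, u1, u2) \<in> crossings cr. \<rho> u2 = \<rho> ov \<otimes> \<rho> u1 \<otimes> \<rho> ov"
    show "\<forall>(ov, u1, u2) \<in> moves cr. \<rho> u2 = \<rho> ov \<otimes> \<rho> u1 \<otimes> \<rho> ov"
    proof clarify
      fix ov u1 u2 assume "(ov, u1, u2) \<in> moves cr"
      then consider "(ov, u1, u2) \<in> crossings cr" | (reversed) "(ov, u2, u1) \<in> crossings cr"
        unfolding moves_iff by blast
      then show "\<rho> u2 = \<rho> ov \<otimes> \<rho> u1 \<otimes> \<rho> ov"
      proof cases
        case reversed
        with cross have u1: "\<rho> u1 = \<rho> ov \<otimes> \<rho> u2 \<otimes> \<rho> ov"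
          by fast
        have "\<rho> ov \<in> Rfl" "\<rho> u2 \<in> Rfl"
          using refl crossing_strands[OF D reversed] by auto
        then show ?thesis
          using reflection_conj_swap[OF _ _ u1] reflection_carrier by blast
      qed (use cross in blast)
    qed
  qed (use crossings_subset_moves in blast)
  then show ?thesis
    unfolding is_coloring_def using crossing_iff by blast
qed

lemma coloring_move:
  assumes "knot_diagram cr" "is_coloring G Rfl cr \<rho>" "(ov, u1, u2) \<in> moves cr"
  shows "\<rho> u2 = \<rho> ov \<otimes> \<rho> u1 \<otimes> \<rho> ov"
  using assms(2,3) unfolding coloring_iff_moves[OF assms(1)] by fast

lemma coloring_conj:
  assumes D: "knot_diagram cr" and col: "is_coloring G Rfl cr \<rho>" and g: "g \<in> carrier G"
  shows "is_coloring G Rfl cr (\<lambda>s. inv g \<otimes> \<rho> s \<otimes> g)"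
  unfolding coloring_iff_moves[OF D]
proof (intro conjI ballI; clarify?)
  show "inv g \<otimes> \<rho> s \<otimes> g \<in> Rfl" if "s \<in> strands cr" for s
    using is_coloring_reflection[OF col that] g by (rule reflection_conj_inv)
  fix ov u1 u2 assume mv: "(ov, u1, u2) \<in> moves cr"
  have "\<rho> ov \<in> carrier G" "\<rho> u1 \<in> carrier G"
    using is_coloring_reflection[OF col] move_strands[OF D mv] reflection_carrier by auto
  then show "inv g \<otimes> \<rho> u2 \<otimes> g = inv g \<otimes> \<rho> ov \<otimes> g \<otimes> (inv g \<otimes> \<rho> u1 \<otimes> g) \<otimes> (inv g \<otimes> \<rho> ov \<otimes> g)"
    using coloring_move[OF D col mv] g by (simp add: conj_mult)
qed

end

section \<open>Coloring sequences\<close>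

lemma valid_seq_closed:
  assumes "valid_seq cr W \<sigma>" "W \<subseteq> A"
    and closed: "\<And>ov u1 u2. (ov, u1, u2) \<in> moves cr \<Longrightarrow> ov \<in> A \<Longrightarrow> u1 \<in> A \<Longrightarrow> u2 \<in> A"
  shows "W \<union> set (map (\<lambda>(ov, u1, u2). u2) \<sigma>) \<subseteq> A"
  using assms(1,2)
proof (induction \<sigma> arbitrary: W)
  case (Cons mv \<sigma>)
  obtain ov u1 u2 where mv: "mv = (ov, u1, u2)"
    by (cases mv) auto
  have "u2 \<in> A"
    using Cons.prems mv by (auto intro: closed)
  moreover have "valid_seq cr (insert u2 W) \<sigma>"
    using Cons.prems(1) mv by simp
  ultimately show ?case
    using Cons.IH[of "insert u2 W"] Cons.prems(2) mv by auto
qed simp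

lemma extend_labels_seed: "valid_seq cr W \<sigma> \<Longrightarrow> s \<in> W \<Longrightarrow> extend_labels H L \<sigma> s = L s"
proof (induction \<sigma> arbitrary: W L)
  case (Cons mv \<sigma>)
  obtain ov u1 u2 where mv: "mv = (ov, u1, u2)"
    by (cases mv) auto
  with Cons.prems have "valid_seq cr (insert u2 W) \<sigma>" "s \<noteq> u2"
    by auto
  with Cons.IH Cons.prems(2) mv show ?case
    by simp
qed simp

lemma extend_labels_eq:
  assumes "valid_seq cr W \<sigma>" "\<forall>s \<in> W. L s = \<rho> s"
    and move: "\<And>ov u1 u2. (ov, u1, u2) \<in> moves cr \<Longrightarrow> \<rho> u2 = \<rho> ov \<otimes>\<^bsub>H\<^esub> \<rho> u1 \<otimes>\<^bsub>H\<^esub> \<rho> ov"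
    and "s \<in> W \<union> set (map (\<lambda>(ov, u1, u2). u2) \<sigma>)"
  shows "extend_labels H L \<sigma> s = \<rho> s"
  using assms(1,2,4)
proof (induction \<sigma> arbitrary: W L)
  case (Cons mv \<sigma>)
  obtain ov u1 u2 where mv: "mv = (ov, u1, u2)"
    by (cases mv) auto
  let ?L = "L(u2 := L ov \<otimes>\<^bsub>H\<^esub> L u1 \<otimes>\<^bsub>H\<^esub> L ov)"
  have "valid_seq cr (insert u2 W) \<sigma>" "\<forall>s \<in> insert u2 W. ?L s = \<rho> s"
    using Cons.prems(1,2) mv move by auto
  moreover have "s \<in> insert u2 W \<union> set (map (\<lambda>(ov, u1, u2). u2) \<sigma>)"
    using Cons.prems(3) mv by auto
  ultimately have "extend_labels H ?L \<sigma> s = \<rho> s"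
    by (rule Cons.IH)
  with mv show ?case
    by simp
qed simp

lemma complete_seq_extend_labels:
  assumes "complete_seq cr E \<sigma>"
    and "\<And>ov u1 u2. (ov, u1, u2) \<in> moves cr \<Longrightarrow> \<rho> u2 = \<rho> ov \<otimes>\<^bsub>H\<^esub> \<rho> u1 \<otimes>\<^bsub>H\<^esub> \<rho> ov"
    and "s \<in> strands cr"
  shows "extend_labels H (\<lambda>s. if s \<in> E then \<rho> s else x) \<sigma> s = \<rho> s"
  using assms unfolding complete_seq_def by (intro extend_labels_eq[of cr E]) auto

lemma complete_seq_generate:
  assumes seq: "complete_seq cr E \<sigma>"
    and move: "\<And>ov u1 u2. (ov, u1, u2) \<in> moves cr \<Longrightarrow> \<rho> u2 = \<rho> ov \<otimes>\<^bsub>H\<^esub> \<rho> u1 \<otimes>\<^bsub>H\<^esub> \<rho> ov"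
    and "s \<in> strands cr"
  shows "\<rho> s \<in> generate H (\<rho> ` E)"
proof -
  have "E \<union> set (map (\<lambda>(ov, u1, u2). u2) \<sigma>) \<subseteq> {s. \<rho> s \<in> generate H (\<rho> ` E)}"
  proof (rule valid_seq_closed)
    show "valid_seq cr E \<sigma>"
      using seq by (simp add: complete_seq_def)
    show "E \<subseteq> {s. \<rho> s \<in> generate H (\<rho> ` E)}"
      by (auto intro: generate.incl)
    fix ov u1 u2 assume "(ov, u1, u2) \<in> moves cr" "ov \<in> {s. \<rho> s \<in> generate H (\<rho> ` E)}"
      "u1 \<in> {s. \<rho> s \<in> generate H (\<rho> ` E)}"
    then show "u2 \<in> {s. \<rho> s \<in> generate H (\<rho> ` E)}"
      by (simp add: move generate.eng)
  qed
  moreover have "E \<union> set (map (\<lambda>(ov, u1, u2). u2) \<sigma>) = strands cr"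
    using seq by (simp add: complete_seq_def)
  ultimately show ?thesis
    using \<open>s \<in> strands cr\<close> by blast
qed

section \<open>Knot groups and good homomorphisms\<close>

abbreviation wirt_gen :: "(nat \<times> bool) list \<Rightarrow> nat \<Rightarrow> (nat \<times> bool) list set" where
  "wirt_gen cr \<equiv> pres_gen (strands cr) (wirt_rels cr)"

lemma group_knot_group: "group (knot_group cr)"
  unfolding knot_group_def by (rule group_presented_group)

lemma wirt_gen_crossing:
  assumes i: "i < length cr"
  shows "wirt_gen cr (Suc i mod length cr) =
    pres_class (strands cr) (wirt_rels cr) [(fst (cr ! i), snd (cr ! i))] \<otimes>\<^bsub>knot_group cr\<^esub> wirt_gen cr i
    \<otimes>\<^bsub>knot_group cr\<^esub> pres_class (strands cr) (wirt_rels cr) [(fst (cr ! i), \<not> snd (cr ! i))]"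
proof -
  let ?j = "Suc i mod length cr"
  let ?rest = "[(fst (cr ! i), snd (cr ! i)), (i, True), (fst (cr ! i), \<not> snd (cr ! i))]"
  have r: "(?j, False) # ?rest \<in> wirt_rels cr"
    unfolding wirt_rels_def using i by auto
  have "0 < length cr"
    using i by linarith
  then have j: "?j \<in> strands cr"
    unfolding strands_def num_strands_def by (simp add: less_max_iff_disj)
  \<comment> \<open>Both the relator and the cancelling pair can be deleted from the word x_j x_j^-1 x_o^e x_i x_o^-e.\<close>
  have "pres_eq (strands cr) (wirt_rels cr) ((?j, True) # (?j, False) # ?rest) [(?j, True)]"
    using pres_step_relator[OF r, of _ "[(?j, True)]" "[]"] by (simp add: pres_step_imp_pres_eq)
  moreover have "pres_eq (strands cr) (wirt_rels cr) ((?j, True) # (?j, False) # ?rest) ?rest"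
    using pres_step_cancel[OF j, of _ "[]" True ?rest] by (simp add: pres_step_imp_pres_eq)
  ultimately have "pres_eq (strands cr) (wirt_rels cr) [(?j, True)] ?rest"
    by (meson pres_eq_sym pres_eq_trans)
  then show ?thesis
    unfolding knot_group_def pres_gen_def presented_group_mult pres_class_eq_iff by simp
qed

lemma wirt_gen_meridian: "s \<in> strands cr \<Longrightarrow> wirt_gen cr s \<in> meridians cr"
proof -
  interpret K: group "knot_group cr" by (rule group_knot_group)
  assume s: "s \<in> strands cr"
  then have "wirt_gen cr s \<in> carrier (knot_group cr)"
    unfolding knot_group_def by (rule pres_gen_carrier)
  then have "wirt_gen cr s = \<one>\<^bsub>knot_group cr\<^esub> \<otimes>\<^bsub>knot_group cr\<^esub> pres_class (strands cr) (wirt_rels cr) [(s, True)]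
      \<otimes>\<^bsub>knot_group cr\<^esub> inv\<^bsub>knot_group cr\<^esub> \<one>\<^bsub>knot_group cr\<^esub>"
    by (simp add: pres_gen_def)
  then show ?thesis
    unfolding meridians_def using s by blast
qed

context reflection_system
begin

lemma hom_meridians:
  assumes h: "h \<in> hom (knot_group cr) G" and gens: "\<And>s. s \<in> strands cr \<Longrightarrow> h (wirt_gen cr s) \<in> Rfl"
  shows "h ` meridians cr \<subseteq> Rfl"
proof
  interpret group_hom "knot_group cr" G h
    by (simp add: group_hom_def group_hom_axioms_def group_knot_group is_group h)
  fix y assume "y \<in> h ` meridians cr"
  then obtain g s b where g: "g \<in> carrier (knot_group cr)" and s: "s \<in> strands cr"
    and y: "y = h (g \<otimes>\<^bsub>knot_group cr\<^esub> pres_class (strands cr) (wirt_rels cr) [(s, b)]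
                   \<otimes>\<^bsub>knot_group cr\<^esub> inv\<^bsub>knot_group cr\<^esub> g)"
    unfolding meridians_def by blast
  have "pres_class (strands cr) (wirt_rels cr) [(s, b)] \<in> carrier (knot_group cr)"
    unfolding knot_group_def presented_group_carrier using s by auto
  moreover have "h (pres_class (strands cr) (wirt_rels cr) [(s, b)]) = h (wirt_gen cr s)"
    using h s gens unfolding knot_group_def by (intro hom_pres_class_letter)
  ultimately have "y = h g \<otimes> h (wirt_gen cr s) \<otimes> inv (h g)"
    unfolding y using g by simp
  then show "y \<in> Rfl"
    using reflection_conj[OF gens[OF s]] g by simp
qed

lemma good_hom_coloring:
  assumes D: "knot_diagram cr" and h: "h \<in> hom (knot_group cr) G" and mer: "h ` meridians cr \<subseteq> Rfl"
  shows "is_coloring G Rfl cr (\<lambda>s. h (wirt_gen cr s))"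
  unfolding is_coloring_def
proof (intro conjI ballI; clarify?)
  interpret group_hom "knot_group cr" G h
    by (simp add: group_hom_def group_hom_axioms_def group_knot_group is_group h)
  have refl: "h (wirt_gen cr s) \<in> Rfl" if "s \<in> strands cr" for s
    using mer wirt_gen_meridian[OF that] by blast
  then show "h (wirt_gen cr s) \<in> Rfl" if "s \<in> strands cr" for s
    using that .
  have letter: "h (pres_class (strands cr) (wirt_rels cr) [(s, b)]) = h (wirt_gen cr s)"
    if "s \<in> strands cr" for s b
    using h that refl[OF that] unfolding knot_group_def by (intro hom_pres_class_letter)
  fix ov u1 u2 assume c: "(ov, u1, u2) \<in> crossings cr"
  then obtain i where i: "i < length cr" "ov = fst (cr ! i)" "u1 = i" "u2 = Suc i mod length cr"
    unfolding crossings_def by blast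
  note strands = crossing_strands[OF D c]
  have car: "pres_class (strands cr) (wirt_rels cr) [(ov, b)] \<in> carrier (knot_group cr)" for b
    unfolding knot_group_def presented_group_carrier using strands(1) by auto
  define e where "e = snd (cr ! i)"
  have e: "cr ! i = (ov, e)"
    unfolding e_def i(2) by (rule prod.collapse[symmetric])
  have "wirt_gen cr u2 = pres_class (strands cr) (wirt_rels cr) [(ov, e)] \<otimes>\<^bsub>knot_group cr\<^esub> wirt_gen cr u1
      \<otimes>\<^bsub>knot_group cr\<^esub> pres_class (strands cr) (wirt_rels cr) [(ov, \<not> e)]"
    using wirt_gen_crossing[OF i(1)] i(3,4) e by simp
  moreover have "wirt_gen cr u1 \<in> carrier (knot_group cr)"
    unfolding knot_group_def using strands(2) by (rule pres_gen_carrier)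
  ultimately have "h (wirt_gen cr u2) = h (wirt_gen cr ov) \<otimes> h (wirt_gen cr u1) \<otimes> h (wirt_gen cr ov)"
    using car letter[OF strands(1)] by simp
  then show "h (wirt_gen cr ov) \<otimes> h (wirt_gen cr u1) \<otimes> inv (h (wirt_gen cr ov)) = h (wirt_gen cr u2)"
    using reflection_inv[OF refl[OF strands(1)]] by simp
qed

lemma coloring_good_hom:
  assumes D: "knot_diagram cr" and col: "is_coloring G Rfl cr \<rho>"
  obtains h where "h \<in> hom (knot_group cr) G" "\<And>s. s \<in> strands cr \<Longrightarrow> h (wirt_gen cr s) = \<rho> s"
    "h ` meridians cr \<subseteq> Rfl"
proof -
  note refl = is_coloring_reflection[OF col]
  define \<phi> where "\<phi> x = (if x \<in> strands cr then \<rho> x else \<one>)" for x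
  have \<phi>_range: "\<phi> x \<in> insert \<one> Rfl" for x
    unfolding \<phi>_def using refl by auto
  have \<phi>: "\<phi> x \<in> carrier G" "inv (\<phi> x) = \<phi> x" for x
    using \<phi>_range[of x] by (auto simp: reflection_carrier reflection_inv)
  have rel: "eval_word G \<phi> r = \<one>" if r_rel: "r \<in> wirt_rels cr" for r
  proof -
    obtain i where i: "i < length cr" and r: "r = [(Suc i mod length cr, False), (fst (cr ! i), snd (cr ! i)),
        (i, True), (fst (cr ! i), \<not> snd (cr ! i))]"
      using r_rel unfolding wirt_rels_def by blast
    let ?o = "fst (cr ! i)" and ?j = "Suc i mod length cr"
    have c: "(?o, i, ?j) \<in> crossings cr"
      unfolding crossings_def using i by blast
    then have "(?o, i, ?j) \<in> moves cr"
      using crossings_subset_moves by blast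
    then have "\<rho> ?j = \<rho> ?o \<otimes> \<rho> i \<otimes> \<rho> ?o"
      by (rule coloring_move[OF D col])
    then have "\<phi> ?j = \<phi> ?o \<otimes> \<phi> i \<otimes> \<phi> ?o"
      using crossing_strands[OF D c] unfolding \<phi>_def by simp
    moreover obtain ov e where "cr ! i = (ov, e)"
      by fastforce
    ultimately show ?thesis
      unfolding r using \<phi> by (simp add: m_assoc)
  qed
  obtain h where h: "h \<in> hom (knot_group cr) G"
    and h_class: "\<And>w. h (pres_class (strands cr) (wirt_rels cr) w) = eval_word G \<phi> w"
    using presented_group_lift[OF \<phi>(1) rel] unfolding knot_group_def by blast
  have gens: "h (wirt_gen cr s) = \<rho> s" if "s \<in> strands cr" for s
    using that refl by (simp add: pres_gen_def h_class \<phi>_def reflection_carrier)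
  show ?thesis
    using h gens hom_meridians[OF h] refl by (intro that) simp_all
qed
end

section \<open>The search\<close>

lemma image_in_Gen_sets:
  assumes fin: "finite E" and card: "card E = coxeter_rank H Rfl"
    and sub: "\<rho> ` E \<subseteq> Rfl" and gen: "generate H (\<rho> ` E) = carrier H"
  shows "\<rho> ` E \<in> Gen_sets H Rfl" "inj_on \<rho> E"
proof -
  have "coxeter_rank H Rfl \<le> card (\<rho> ` E)"
    unfolding coxeter_rank_def by (rule Least_le) (use fin sub gen in auto)
  moreover have "card (\<rho> ` E) \<le> card E"
    using fin by (rule card_image_le)
  ultimately have "card (\<rho> ` E) = card E"
    using card by linarith
  then show "inj_on \<rho> E"
    using fin by (simp add: eq_card_imp_inj_on)
  show "\<rho> ` E \<in> Gen_sets H Rfl"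
    unfolding Gen_sets_def using fin sub gen card \<open>card (\<rho> ` E) = card E\<close> by auto
qed

context reflection_system
begin

lemma good_surj_seeds_generate:
  assumes D: "knot_diagram cr" and seq: "complete_seq cr E \<sigma>"
    and h: "h \<in> hom (knot_group cr) G" and mer: "h ` meridians cr \<subseteq> Rfl"
    and surj: "h ` carrier (knot_group cr) = carrier G"
  shows "generate G ((\<lambda>s. h (wirt_gen cr s)) ` E) = carrier G"
proof -
  let ?\<rho> = "\<lambda>s. h (wirt_gen cr s)"
  have col: "is_coloring G Rfl cr ?\<rho>"
    using D h mer by (rule good_hom_coloring)
  have "?\<rho> ` E \<subseteq> carrier G"
    using seq is_coloring_reflection[OF col] reflection_carrier unfolding complete_seq_def by blast
  moreover have "carrier G = generate G (?\<rho> ` strands cr)"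
    unfolding surj[symmetric] using h unfolding knot_group_def by (rule hom_presented_group_image)
  moreover have "?\<rho> ` strands cr \<subseteq> generate G (?\<rho> ` E)"
    using complete_seq_generate[where \<rho> = ?\<rho>, OF seq coloring_move[OF D col]] by blast
  ultimately show ?thesis
    by (metis equalityI generate_incl generate_is_subgroup generate_subgroup_incl)
qed

lemma search_imp_good_surj:
  assumes D: "knot_diagram cr" and seq: "complete_seq cr E \<sigma>"
    and gen: "generate G R = carrier G" and f: "bij_betw f E R"
    and col: "is_coloring G Rfl cr (extend_labels G (\<lambda>s. if s \<in> E then f s else \<one>) \<sigma>)"
  obtains h where "h \<in> hom (knot_group cr) G" "h ` meridians cr \<subseteq> Rfl"
    "h ` carrier (knot_group cr) = carrier G"
proof -
  let ?L = "extend_labels G (\<lambda>s. if s \<in> E then f s else \<one>) \<sigma>"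
  obtain h where h: "h \<in> hom (knot_group cr) G" and h_gen: "\<And>s. s \<in> strands cr \<Longrightarrow> h (wirt_gen cr s) = ?L s"
    and mer: "h ` meridians cr \<subseteq> Rfl"
    using coloring_good_hom[OF D col] by blast
  have E: "E \<subseteq> strands cr" "valid_seq cr E \<sigma>"
    using seq by (auto simp: complete_seq_def)
  have "R = ?L ` E"
    using f E(2) by (auto simp: bij_betw_def extend_labels_seed)
  also have "\<dots> \<subseteq> (\<lambda>s. h (wirt_gen cr s)) ` strands cr"
    using E(1) h_gen by auto
  finally have "carrier G \<subseteq> h ` carrier (knot_group cr)"
    using gen mono_generate hom_presented_group_image[of h] h unfolding knot_group_def by metis
  moreover have "h ` carrier (knot_group cr) \<subseteq> carrier G"
    using h by (auto simp: hom_def)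
  ultimately show ?thesis
    using that h mer by blast
qed

lemma good_surj_imp_search:
  assumes D: "knot_diagram cr" and seq: "complete_seq cr E \<sigma>"
    and fin: "finite E" and card: "card E = coxeter_rank G Rfl" and rob: "robust G Rfl \<A>"
    and h: "h \<in> hom (knot_group cr) G" and mer: "h ` meridians cr \<subseteq> Rfl"
    and surj: "h ` carrier (knot_group cr) = carrier G"
  shows "\<exists>R \<in> \<A>. \<exists>f. bij_betw f E R \<and>
    is_coloring G Rfl cr (extend_labels G (\<lambda>s. if s \<in> E then f s else \<one>) \<sigma>)"
proof -
  define \<rho> where "\<rho> s = h (wirt_gen cr s)" for s
  have col: "is_coloring G Rfl cr \<rho>"
    unfolding \<rho>_def using D h mer by (rule good_hom_coloring)
  have gen: "generate G (\<rho> ` E) = carrier G"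
    unfolding \<rho>_def[abs_def] using D seq h mer surj by (rule good_surj_seeds_generate)
  have E: "E \<subseteq> strands cr"
    using seq by (simp add: complete_seq_def)
  then have sub: "\<rho> ` E \<subseteq> Rfl"
    using is_coloring_reflection[OF col] by blast
  then have "\<rho> ` E \<in> Gen_sets G Rfl" and inj: "inj_on \<rho> E"
    using image_in_Gen_sets[OF fin card _ gen] by auto
  then obtain R g where R: "R \<in> \<A>" and g: "g \<in> carrier G" and conj: "(\<lambda>r. inv g \<otimes> r \<otimes> g) ` \<rho> ` E = R"
    using rob unfolding robust_def gen_equiv_def by blast
  \<comment> \<open>Conjugating the coloring by g turns its seed labels into the representative R.\<close>
  define \<rho>' where "\<rho>' s = inv g \<otimes> \<rho> s \<otimes> g" for s
  have col': "is_coloring G Rfl cr \<rho>'"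
    unfolding \<rho>'_def using D col g by (rule coloring_conj)
  have "inj_on \<rho>' E"
    using comp_inj_on[OF inj inj_on_subset[OF inj_on_conj[OF g]]] sub reflections_closed
    unfolding \<rho>'_def comp_def by blast
  moreover have "\<rho>' ` E = R"
    unfolding \<rho>'_def using conj by (simp add: image_image)
  ultimately have bij: "bij_betw \<rho>' E R"
    by (simp add: bij_betw_def)
  have "extend_labels G (\<lambda>s. if s \<in> E then \<rho>' s else \<one>) \<sigma> s = \<rho>' s" if "s \<in> strands cr" for s
    using complete_seq_extend_labels[where \<rho> = \<rho>', OF seq coloring_move[OF D col'] that] .
  then have "is_coloring G Rfl cr (extend_labels G (\<lambda>s. if s \<in> E then \<rho>' s else \<one>) \<sigma>)"
    using col' is_coloring_cong[OF D] by blast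
  with R bij show ?thesis
    by blast
qed

theorem search_iff_good_surj:
  assumes D: "knot_diagram cr" and seq: "complete_seq cr E \<sigma>"
    and fin: "finite E" and card: "card E = coxeter_rank G Rfl" and rob: "robust G Rfl \<A>"
  shows "(\<exists>R \<in> \<A>. \<exists>f. bij_betw f E R \<and>
      is_coloring G Rfl cr (extend_labels G (\<lambda>s. if s \<in> E then f s else \<one>) \<sigma>)) \<longleftrightarrow>
    (\<exists>h. h \<in> hom (knot_group cr) G \<and> h ` meridians cr \<subseteq> Rfl \<and> h ` carrier (knot_group cr) = carrier G)"
proof
  assume "\<exists>R \<in> \<A>. \<exists>f. bij_betw f E R \<and>
      is_coloring G Rfl cr (extend_labels G (\<lambda>s. if s \<in> E then f s else \<one>) \<sigma>)"
  then obtain R f where R: "R \<in> \<A>" and f: "bij_betw f E R"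
    and col: "is_coloring G Rfl cr (extend_labels G (\<lambda>s. if s \<in> E then f s else \<one>) \<sigma>)"
    by blast
  have "generate G R = carrier G"
    using rob R unfolding robust_def Gen_sets_def by blast
  then show "\<exists>h. h \<in> hom (knot_group cr) G \<and> h ` meridians cr \<subseteq> Rfl \<and> h ` carrier (knot_group cr) = carrier G"
    using search_imp_good_surj[OF D seq _ f col] by metis
next
  assume "\<exists>h. h \<in> hom (knot_group cr) G \<and> h ` meridians cr \<subseteq> Rfl \<and> h ` carrier (knot_group cr) = carrier G"
  then show "\<exists>R \<in> \<A>. \<exists>f. bij_betw f E R \<and>
      is_coloring G Rfl cr (extend_labels G (\<lambda>s. if s \<in> E then f s else \<one>) \<sigma>)"
    using good_surj_imp_search[OF D seq fin card rob] by blast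
qed

end

theorem mainTheorem1:
  fixes cr :: "(nat \<times> bool) list"
    and E :: "nat set"
    and \<sigma> :: "(nat \<times> nat \<times> nat) list"
    and \<A> :: "nat set \<Rightarrow> (nat \<Rightarrow> nat \<Rightarrow> nat) \<Rightarrow> (nat \<times> bool) list set set set"
  assumes D: "knot_diagram cr"
    and E_fin: "finite E"
    and E_card: "card E = wirtinger_number cr"
    and seq: "complete_seq cr E \<sigma>"
    and rob: "\<And>V m. coxeter_graph V m \<Longrightarrow> finite (carrier (cox_group V m)) \<Longrightarrow>
               coxeter_rank (cox_group V m) (reflections V m) = wirtinger_number cr \<Longrightarrow>
               robust (cox_group V m) (reflections V m) (\<A> V m)"
  shows "((\<exists>V m. coxeter_graph V m \<and> finite (carrier (cox_group V m)) \<and>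
              coxeter_rank (cox_group V m) (reflections V m) = wirtinger_number cr \<and>
              (\<exists>h. good_surj cr V m h))
          \<longleftrightarrow>
          (\<exists>V m. coxeter_graph V m \<and> finite (carrier (cox_group V m)) \<and>
              coxeter_rank (cox_group V m) (reflections V m) = wirtinger_number cr \<and>
              search_succeeds cr E \<sigma> V m (\<A> V m)))
       \<and> (\<forall>V m. coxeter_graph V m \<and> finite (carrier (cox_group V m)) \<and>
              coxeter_rank (cox_group V m) (reflections V m) = wirtinger_number cr \<longrightarrow>
              (search_succeeds cr E \<sigma> V m (\<A> V m) \<longleftrightarrow> (\<exists>h. good_surj cr V m h)))"
proof -
  have "search_succeeds cr E \<sigma> V m (\<A> V m) \<longleftrightarrow> (\<exists>h. good_surj cr V m h)"
    if H: "coxeter_graph V m" "finite (carrier (cox_group V m))"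
      "coxeter_rank (cox_group V m) (reflections V m) = wirtinger_number cr" for V m
    using reflection_system.search_iff_good_surj[OF reflection_system_cox_group D seq E_fin _ rob[OF H]]
      E_card H(3)
    unfolding search_succeeds_def good_surj_def by simp
  then show ?thesis
    by blast
qed

end
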